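(* Let $\beta>2\alpha>0$ with $\beta+2\alpha>1$, and let $\varphi_N(x)=\frac12x^TAx-\sum_{k=1}^{s_N}\log\cosh(x^TAe_k)$ for $x\in\mathbb{R}^{s_N}$. Then $\varphi_N$ attains its minimum at $x=\overrightarrow{m}^*$ and at $x=-\overrightarrow{m}^*$, where $\overrightarrow{m}^*=(m^*,\dots,m^* )\in\mathbb{R}^{s_N}$ and $m^*=m^*(\beta+2\alpha)$ is the largest solution of $x=\tanh((\beta+2\alpha)x)$.
   Context: $A$ is the $s_N\times s_N$ symmetric circulant matrix $A=\beta I+\alpha(P+P^T)$, where $P$ is the cyclic shift matrix (so $A_{kk}=\beta$, $A_{k,k\pm1}=\alpha$ with indices mod $s_N$); $e_k$ are the standard basis vectors of $\mathbb{R}^{s_N}$. *)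

theory Defs
  imports Complex_Main
begin

text \<open>Vectors in R^n are functions nat \<Rightarrow> real, only indices below n matter.
  The circulant matrix A = beta I + alpha (P + P^T), P the cyclic shift (indices mod n).\<close>

definition shiftP :: "nat \<Rightarrow> nat \<Rightarrow> nat \<Rightarrow> real" where
  "shiftP n i j = (if j = Suc i mod n then 1 else 0)"

definition circA :: "nat \<Rightarrow> real \<Rightarrow> real \<Rightarrow> nat \<Rightarrow> nat \<Rightarrow> real" where
  "circA n \<alpha> \<beta> i j = \<beta> * (if i = j then 1 else 0) + \<alpha> * (shiftP n i j + shiftP n j i)"

definition phiN :: "nat \<Rightarrow> real \<Rightarrow> real \<Rightarrow> (nat \<Rightarrow> real) \<Rightarrow> real" where
  "phiN n \<alpha> \<beta> x =
     (1/2) * (\<Sum>i<n. \<Sum>j<n. x i * circA n \<alpha> \<beta> i j * x j)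
     - (\<Sum>k<n. ln (cosh (\<Sum>i<n. x i * circA n \<alpha> \<beta> i k)))"

end

theory Submission
  imports Defs "HOL-Analysis.Analysis"
begin

text \<open>Put \<open>c = \<beta> + 2\<alpha>\<close>. Because \<open>\<beta> \<ge> 2\<alpha>\<close>, the matrix \<open>A\<close> is positive semidefinite with
  largest eigenvalue \<open>c\<close>. Given \<open>x\<close>, let \<open>z = tanh (A x)\<close> componentwise; then
  \<open>(x - z)\<^sup>T A (x - z) \<ge> 0\<close> and \<open>z\<^sup>T A z \<le> c |z|\<^sup>2\<close>, and the tangent inequality of the convex
  function \<open>ln \<circ> cosh\<close> at \<open>(A x)\<^sub>k\<close> evaluated at \<open>c z\<^sub>k\<close> give
  \<open>\<phi>\<^sub>N(x) \<ge> \<Sum>\<^sub>k E(z\<^sub>k)\<close> with \<open>E(s) = c s\<^sup>2/2 - ln cosh (c s)\<close>.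
  The even function \<open>E\<close> has derivative \<open>c (s - tanh (c s))\<close>, which by concavity of \<open>tanh\<close>
  on \<open>[0, \<infinity>)\<close> is \<open>\<le> 0\<close> on \<open>[0, m\<^sup>*]\<close> and, \<open>m\<^sup>*\<close> being the largest fixed point, \<open>\<ge> 0\<close>
  beyond; so \<open>E \<ge> E(m\<^sup>*)\<close>. Finally \<open>\<phi>\<^sub>N(\<plusminus>m\<^sup>*, \<dots>, \<plusminus>m\<^sup>*) = s\<^sub>N E(m\<^sup>*)\<close>.\<close>

lemma has_real_derivative_ln_cosh:
  "((\<lambda>u. ln (cosh u)) has_real_derivative tanh x) (at (x::real))"
  by (rule derivative_eq_intros refl | simp add: tanh_def divide_simps)+

lemma convex_on_ln_cosh: "convex_on UNIV (\<lambda>u::real. ln (cosh u))"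
proof (rule f''_ge0_imp_convex)
  show "((\<lambda>u. ln (cosh u)) has_real_derivative tanh x) (at x)" for x :: real
    by (rule has_real_derivative_ln_cosh)
  show "(tanh has_real_derivative 1 - tanh x ^ 2) (at x)" for x :: real
    by (rule derivative_eq_intros refl | simp)+
  show "0 \<le> 1 - tanh x ^ 2" for x :: real
    using tanh_real_bounds[of x] by (simp add: abs_square_le_1 abs_le_iff)
qed auto

lemma ln_cosh_ge_tangent: "ln (cosh y) + tanh y * (u - y) \<le> ln (cosh (u::real))"
proof -
  have "tanh y * (u - y) \<le> ln (cosh u) - ln (cosh y)"
    by (rule convex_on_imp_above_tangent[OF convex_on_ln_cosh])
      (auto intro: has_real_derivative_ln_cosh)
  then show ?thesis by simp
qed

lemma concave_on_tanh_nonneg: "concave_on {0..} (tanh :: real \<Rightarrow> real)"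
proof (rule f''_le0_imp_concave)
  show "(tanh has_real_derivative 1 - tanh x ^ 2) (at x)" for x :: real
    by (rule derivative_eq_intros refl | simp)+
  show "((\<lambda>x. 1 - tanh x ^ 2) has_real_derivative - 2 * tanh x * (1 - tanh x ^ 2)) (at x)" for x :: real
    by (rule derivative_eq_intros refl | simp)+
  show "- 2 * tanh x * (1 - tanh x ^ 2) \<le> 0" if "x \<in> {0..}" for x :: real
    using that tanh_real_bounds[of x] by (simp add: abs_square_le_1 abs_le_iff)
qed auto

lemma le_tanh_below_fixed_point:
  fixes c m t :: real
  assumes "0 \<le> c" and fixed: "m = tanh (c * m)" and "0 \<le> t" "t \<le> m"
  shows "t \<le> tanh (c * t)"
proof (cases "m = 0")
  case True
  then show ?thesis using assms by simp
next
  case False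
  define l where "l = t / m"
  have "0 \<le> l" "l \<le> 1"
    using assms False by (auto simp: l_def)
  then have "(1 - l) * tanh 0 + l * tanh (c * m) \<le> tanh ((1 - l) *\<^sub>R 0 + l *\<^sub>R (c * m))"
    using assms by (intro concave_onD[OF concave_on_tanh_nonneg]) auto
  also have "(1 - l) *\<^sub>R 0 + l *\<^sub>R (c * m) = c * t"
    using False by (simp add: l_def)
  finally show ?thesis
    using fixed[symmetric] False by (simp add: l_def)
qed

lemma tanh_le_above_largest_fixed_point:
  fixes c m t :: real
  assumes largest: "\<forall>y. y = tanh (c * y) \<longrightarrow> y \<le> m" and "m \<le> t"
  shows "tanh (c * t) \<le> t"
proof (rule ccontr)
  assume below: "\<not> tanh (c * t) \<le> t"
  have "0 \<le> m" using largest by auto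
  then have "0 \<le> (t + 1) - tanh (c * (t + 1))"
    using tanh_real_lt_1[of "c * (t + 1)"] \<open>m \<le> t\<close> by simp
  moreover have "\<forall>x. t \<le> x \<and> x \<le> t + 1 \<longrightarrow> isCont (\<lambda>s. s - tanh (c * s)) x"
    by (intro allI impI continuous_intros) simp
  ultimately obtain x where x: "t \<le> x" "x - tanh (c * x) = 0"
    using IVT[of "\<lambda>s. s - tanh (c * s)" t 0 "t + 1"] below by auto
  then have "x = t" using largest \<open>m \<le> t\<close> by force
  then show False using x below by simp
qed

definition mean_field_energy :: "real \<Rightarrow> real \<Rightarrow> real" where
  "mean_field_energy c s = c / 2 * s\<^sup>2 - ln (cosh (c * s))"

lemma mean_field_energy_minus [simp]: "mean_field_energy c (- s) = mean_field_energy c s"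
  by (simp add: mean_field_energy_def)

lemma has_real_derivative_mean_field_energy:
  "(mean_field_energy c has_real_derivative c * (s - tanh (c * s))) (at s)"
  unfolding mean_field_energy_def
  by (rule derivative_eq_intros refl | simp add: tanh_def field_simps)+

lemma mean_field_energy_tanh_le:
  "mean_field_energy c (tanh y) \<le> y * tanh y - c / 2 * (tanh y)\<^sup>2 - ln (cosh y)"
  using ln_cosh_ge_tangent[of y "c * tanh y"]
  by (simp add: mean_field_energy_def power2_eq_square algebra_simps)

lemma mean_field_energy_min_at_largest_fixed_point:
  fixes c m s :: real
  assumes "0 \<le> c" and fixed: "m = tanh (c * m)"
    and largest: "\<forall>y. y = tanh (c * y) \<longrightarrow> y \<le> m"
  shows "mean_field_energy c m \<le> mean_field_energy c s"
proof -
  have nonneg: "mean_field_energy c m \<le> mean_field_energy c s" if "0 \<le> s" for s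
  proof (cases "s \<le> m")
    case True
    show ?thesis
    proof (rule DERIV_nonpos_imp_nonincreasing[OF True])
      fix x assume "s \<le> x" "x \<le> m"
      then have "c * (x - tanh (c * x)) \<le> 0"
        using le_tanh_below_fixed_point[of c m x] assms \<open>0 \<le> s\<close>
        by (simp add: mult_nonneg_nonpos)
      then show "\<exists>y. DERIV (mean_field_energy c) x :> y \<and> y \<le> 0"
        using has_real_derivative_mean_field_energy by blast
    qed
  next
    case False
    show ?thesis
    proof (rule DERIV_nonneg_imp_nondecreasing[of m s])
      show "m \<le> s" using False by simp
      fix x assume "m \<le> x" "x \<le> s"
      then have "0 \<le> c * (x - tanh (c * x))"
        using tanh_le_above_largest_fixed_point[OF largest] \<open>0 \<le> c\<close> by simp
      then show "\<exists>y. DERIV (mean_field_energy c) x :> y \<and> y \<ge> 0"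
        using has_real_derivative_mean_field_energy by blast
    qed
  qed
  show ?thesis
    using nonneg[of s] nonneg[of "- s"] by (cases "0 \<le> s") auto
qed

definition circ_form :: "nat \<Rightarrow> real \<Rightarrow> real \<Rightarrow> (nat \<Rightarrow> real) \<Rightarrow> (nat \<Rightarrow> real) \<Rightarrow> real" where
  "circ_form n \<alpha> \<beta> u v = (\<Sum>i<n. \<Sum>j<n. u i * circA n \<alpha> \<beta> i j * v j)"

lemma circA_commute: "circA n \<alpha> \<beta> i j = circA n \<alpha> \<beta> j i"
  by (simp add: circA_def add.commute)

lemma circ_form_commute: "circ_form n \<alpha> \<beta> u v = circ_form n \<alpha> \<beta> v u"
  unfolding circ_form_def
  by (subst sum.swap) (simp add: circA_commute mult.commute mult.left_commute)

lemma circ_form_diff_self: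
  "circ_form n \<alpha> \<beta> (\<lambda>i. u i - v i) (\<lambda>i. u i - v i) =
     circ_form n \<alpha> \<beta> u u - 2 * circ_form n \<alpha> \<beta> u v + circ_form n \<alpha> \<beta> v v"
proof -
  have "circ_form n \<alpha> \<beta> (\<lambda>i. u i - v i) (\<lambda>i. u i - v i) =
      circ_form n \<alpha> \<beta> u u - circ_form n \<alpha> \<beta> u v - circ_form n \<alpha> \<beta> v u + circ_form n \<alpha> \<beta> v v"
    unfolding circ_form_def by (simp add: algebra_simps sum.distrib sum_subtractf)
  then show ?thesis
    using circ_form_commute[of n \<alpha> \<beta> v u] by simp
qed

lemma sum_lessThan_rotate:
  fixes g :: "nat \<Rightarrow> 'a::comm_monoid_add"
  assumes "0 < n"
  shows "(\<Sum>i<n. g (Suc i mod n)) = (\<Sum>i<n. g i)"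
proof -
  obtain k where n: "n = Suc k" using assms by (cases n) auto
  have "(\<Sum>i<Suc k. g (Suc i mod Suc k)) = (\<Sum>i<k. g (Suc i)) + g 0"
    by simp
  also have "\<dots> = (\<Sum>i<Suc k. g i)"
    by (subst sum.lessThan_Suc_shift) (simp add: add.commute)
  finally show ?thesis using n by simp
qed

lemma sum_sum_shiftP:
  "(\<Sum>i<n. \<Sum>j<n. u i * shiftP n i j * v j) = (\<Sum>i<n. u i * v (Suc i mod n))"
proof (intro sum.cong refl)
  fix i assume "i \<in> {..<n}"
  have "(\<Sum>j<n. u i * shiftP n i j * v j) = (\<Sum>j<n. if j = Suc i mod n then u i * v j else 0)"
    by (intro sum.cong refl) (simp add: shiftP_def)
  then show "(\<Sum>j<n. u i * shiftP n i j * v j) = u i * v (Suc i mod n)"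
    using \<open>i \<in> {..<n}\<close> by simp
qed

lemma circ_form_expand:
  "circ_form n \<alpha> \<beta> u v = \<beta> * (\<Sum>i<n. u i * v i)
     + \<alpha> * (\<Sum>i<n. u i * v (Suc i mod n)) + \<alpha> * (\<Sum>i<n. v i * u (Suc i mod n))"
proof -
  have diagonal: "(\<Sum>i<n. \<Sum>j<n. u i * (if i = j then 1 else 0) * v j) = (\<Sum>i<n. u i * v i)"
    by (simp add: if_distrib[of "\<lambda>x. _ * x * _"] cong: if_cong)
  have backward: "(\<Sum>i<n. \<Sum>j<n. u i * shiftP n j i * v j) = (\<Sum>i<n. v i * u (Suc i mod n))"
    by (subst sum.swap) (simp add: sum_sum_shiftP[where u = v and v = u, symmetric] algebra_simps)
  have "circ_form n \<alpha> \<beta> u v = \<beta> * (\<Sum>i<n. \<Sum>j<n. u i * (if i = j then 1 else 0) * v j)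
      + \<alpha> * (\<Sum>i<n. \<Sum>j<n. u i * shiftP n i j * v j) + \<alpha> * (\<Sum>i<n. \<Sum>j<n. u i * shiftP n j i * v j)"
    unfolding circ_form_def circA_def by (simp add: algebra_simps sum.distrib sum_distrib_left)
  then show ?thesis
    by (simp only: diagonal sum_sum_shiftP backward)
qed

lemma abs_sum_cyclic_products_le:
  fixes w :: "nat \<Rightarrow> real"
  assumes "0 < n"
  shows "\<bar>\<Sum>i<n. w i * w (Suc i mod n)\<bar> \<le> (\<Sum>i<n. (w i)\<^sup>2)"
proof -
  have "\<bar>\<Sum>i<n. w i * w (Suc i mod n)\<bar> \<le> (\<Sum>i<n. ((w i)\<^sup>2 + (w (Suc i mod n))\<^sup>2) / 2)"
  proof (rule order_trans[OF sum_abs sum_mono])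
    show "\<bar>w i * w (Suc i mod n)\<bar> \<le> ((w i)\<^sup>2 + (w (Suc i mod n))\<^sup>2) / 2" for i
      using sum_squares_bound[of "\<bar>w i\<bar>" "\<bar>w (Suc i mod n)\<bar>"] by (simp add: abs_mult)
  qed
  also have "\<dots> = (\<Sum>i<n. (w i)\<^sup>2)"
    using sum_lessThan_rotate[OF assms, of "\<lambda>i. (w i)\<^sup>2"]
    by (simp add: sum.distrib flip: sum_divide_distrib)
  finally show ?thesis .
qed

lemma circ_form_self_bounds:
  assumes "0 < n"
  shows "(\<beta> - 2 * \<bar>\<alpha>\<bar>) * (\<Sum>i<n. (w i)\<^sup>2) \<le> circ_form n \<alpha> \<beta> w w"
    and "circ_form n \<alpha> \<beta> w w \<le> (\<beta> + 2 * \<bar>\<alpha>\<bar>) * (\<Sum>i<n. (w i)\<^sup>2)"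
proof -
  define S where "S = (\<Sum>i<n. (w i)\<^sup>2)"
  define C where "C = (\<Sum>i<n. w i * w (Suc i mod n))"
  have form: "circ_form n \<alpha> \<beta> w w = \<beta> * S + 2 * \<alpha> * C"
    by (simp add: circ_form_expand S_def C_def power2_eq_square mult.commute)
  have "\<bar>2 * \<alpha> * C\<bar> \<le> 2 * \<bar>\<alpha>\<bar> * S"
    using abs_sum_cyclic_products_le[OF assms, of w]
    by (simp add: abs_mult S_def C_def mult_left_mono)
  then show "(\<beta> - 2 * \<bar>\<alpha>\<bar>) * S \<le> circ_form n \<alpha> \<beta> w w"
    and "circ_form n \<alpha> \<beta> w w \<le> (\<beta> + 2 * \<bar>\<alpha>\<bar>) * S"
    unfolding form by (auto simp: algebra_simps abs_le_iff)
qed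

lemma sum_circA_column:
  assumes "k < n"
  shows "(\<Sum>i<n. circA n \<alpha> \<beta> i k) = \<beta> + 2 * \<alpha>"
proof -
  have "0 < n" using assms by simp
  have "(\<Sum>i<n. circA n \<alpha> \<beta> i k) = circ_form n \<alpha> \<beta> (\<lambda>_. 1) (\<lambda>j. if j = k then 1 else 0)"
    unfolding circ_form_def using assms by (simp add: if_distrib[of "\<lambda>x. _ * x"] cong: if_cong)
  also have "\<dots> = \<beta> + \<alpha> * (\<Sum>i<n. if Suc i mod n = k then 1 else 0) + \<alpha>"
    using assms by (simp add: circ_form_expand)
  also have "(\<Sum>i<n. if Suc i mod n = k then 1 else 0) = (\<Sum>i<n. if i = k then 1 else 0 :: real)"
    by (rule sum_lessThan_rotate[OF \<open>0 < n\<close>])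
  finally show ?thesis using assms by simp
qed

lemma phiN_const:
  assumes "0 < n"
  shows "phiN n \<alpha> \<beta> (\<lambda>_. t) = real n * mean_field_energy (\<beta> + 2 * \<alpha>) t"
proof -
  have "(\<Sum>i<n. \<Sum>j<n. t * circA n \<alpha> \<beta> i j * t) = real n * (\<beta> + 2 * \<alpha>) * t\<^sup>2"
    using circ_form_expand[of n \<alpha> \<beta> "\<lambda>_. t" "\<lambda>_. t"] assms
    by (simp add: circ_form_def power2_eq_square algebra_simps)
  moreover have "(\<Sum>i<n. t * circA n \<alpha> \<beta> i k) = (\<beta> + 2 * \<alpha>) * t" if "k < n" for k
    using sum_circA_column[OF that] by (simp flip: sum_distrib_left)
  ultimately show ?thesis
    by (simp add: phiN_def mean_field_energy_def algebra_simps)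
qed

lemma sum_mean_field_energy_le_phiN:
  fixes x :: "nat \<Rightarrow> real"
  assumes "0 < n" and psd: "2 * \<bar>\<alpha>\<bar> \<le> \<beta>"
  defines "y \<equiv> \<lambda>k. \<Sum>i<n. x i * circA n \<alpha> \<beta> i k"
  shows "(\<Sum>k<n. mean_field_energy (\<beta> + 2 * \<bar>\<alpha>\<bar>) (tanh (y k))) \<le> phiN n \<alpha> \<beta> x"
proof -
  define c where "c = \<beta> + 2 * \<bar>\<alpha>\<bar>"
  define z where "z = (\<lambda>k. tanh (y k))"
  have cross: "circ_form n \<alpha> \<beta> x z = (\<Sum>k<n. y k * z k)"
    unfolding circ_form_def y_def by (subst sum.swap) (simp add: sum_distrib_right)
  have "0 \<le> (\<beta> - 2 * \<bar>\<alpha>\<bar>) * (\<Sum>i<n. (x i - z i)\<^sup>2)"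
    using psd by (intro mult_nonneg_nonneg sum_nonneg) auto
  then have "0 \<le> circ_form n \<alpha> \<beta> (\<lambda>i. x i - z i) (\<lambda>i. x i - z i)"
    using circ_form_self_bounds(1)[OF assms(1), where \<alpha> = \<alpha> and \<beta> = \<beta> and w = "\<lambda>i. x i - z i"] by linarith
  moreover have "circ_form n \<alpha> \<beta> z z \<le> c * (\<Sum>k<n. (z k)\<^sup>2)"
    unfolding c_def by (rule circ_form_self_bounds(2)[OF assms(1)])
  ultimately have quadratic: "2 * (\<Sum>k<n. y k * z k) - c * (\<Sum>k<n. (z k)\<^sup>2) \<le> circ_form n \<alpha> \<beta> x x"
    using circ_form_diff_self[of n \<alpha> \<beta> x z] cross by linarith
  have "(\<Sum>k<n. mean_field_energy c (z k)) \<le> (\<Sum>k<n. y k * z k - c / 2 * (z k)\<^sup>2 - ln (cosh (y k)))"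
    unfolding z_def by (intro sum_mono mean_field_energy_tanh_le)
  also have "\<dots> = (\<Sum>k<n. y k * z k) - c / 2 * (\<Sum>k<n. (z k)\<^sup>2) - (\<Sum>k<n. ln (cosh (y k)))"
    by (simp add: sum_subtractf sum_distrib_left)
  also have "\<dots> \<le> circ_form n \<alpha> \<beta> x x / 2 - (\<Sum>k<n. ln (cosh (y k)))"
    using quadratic by linarith
  also have "\<dots> = phiN n \<alpha> \<beta> x"
    by (simp add: phiN_def circ_form_def y_def)
  finally show ?thesis
    by (simp add: c_def z_def)
qed

theorem lemma4p5:
  fixes n :: nat and \<alpha> \<beta> m :: real
  assumes "n \<ge> 1"
    and "\<beta> > 2 * \<alpha>" and "2 * \<alpha> > 0" and "\<beta> + 2 * \<alpha> > 1"
    and "m = tanh ((\<beta> + 2 * \<alpha>) * m)"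
    and "\<forall>y::real. y = tanh ((\<beta> + 2 * \<alpha>) * y) \<longrightarrow> y \<le> m"
  shows "(\<forall>x. phiN n \<alpha> \<beta> (\<lambda>_. m) \<le> phiN n \<alpha> \<beta> x) \<and>
         (\<forall>x. phiN n \<alpha> \<beta> (\<lambda>_. - m) \<le> phiN n \<alpha> \<beta> x)"
proof -
  let ?E = "mean_field_energy (\<beta> + 2 * \<alpha>)"
  have n: "0 < n" and \<alpha>: "\<bar>\<alpha>\<bar> = \<alpha>" using assms(1,3) by auto
  have "real n * ?E m \<le> phiN n \<alpha> \<beta> x" for x
  proof -
    have "real n * ?E m = (\<Sum>k<n. ?E m)" by simp
    also have "\<dots> \<le> (\<Sum>k<n. ?E (tanh (\<Sum>i<n. x i * circA n \<alpha> \<beta> i k)))"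
      using assms(2,3,5,6) by (intro sum_mono mean_field_energy_min_at_largest_fixed_point) auto
    also have "\<dots> \<le> phiN n \<alpha> \<beta> x"
      using sum_mean_field_energy_le_phiN[OF n, of \<alpha> \<beta> x] assms(2) \<alpha> by simp
    finally show ?thesis .
  qed
  then show ?thesis
    using phiN_const[OF n, of \<alpha> \<beta>] by simp
qed

end
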